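(* There are no semi-equivelar maps of types $(3^4,4^2)$ or $(3,4^4)$ on the closed surface of Euler characteristic $-1$. *)

theory Defs
  imports Main
begin

text \<open>Faces: a finite set F of lists; each face is a
  cycle of distinct vertices (length at least 3), read cyclically.\<close>

definition face_edges :: "'a list \<Rightarrow> 'a set set" where
  "face_edges f = {{f ! i, f ! (Suc i mod length f)} | i. i < length f}"

definition map_edges :: "'a list set \<Rightarrow> 'a set set" where
  "map_edges F = \<Union> (face_edges ` F)"

text \<open>This says the link of v is a single cycle.\<close>

definition face_cycle_at :: "'a list set \<Rightarrow> 'a \<Rightarrow> 'a list list \<Rightarrow> 'a list \<Rightarrow> bool" where
  "face_cycle_at F v fs us \<longleftrightarrow>
     length fs = length us \<and> length fs \<ge> 3 \<and> distinct fs \<and> distinct us \<and>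
     set fs = {f \<in> F. v \<in> set f} \<and>
     (\<forall>i < length fs. {v, us ! i} \<in> face_edges (fs ! i) \<and>
                       {v, us ! (Suc i mod length fs)} \<in> face_edges (fs ! i))"

definition map_connected :: "'a set \<Rightarrow> 'a list set \<Rightarrow> bool" where
  "map_connected V F \<longleftrightarrow>
     (\<forall>u\<in>V. \<forall>w\<in>V. (u, w) \<in> {(x, y). {x, y} \<in> map_edges F}\<^sup>*)"

definition polyhedral_map :: "'a set \<Rightarrow> 'a list set \<Rightarrow> bool" where
  "polyhedral_map V F \<longleftrightarrow>
     finite V \<and> finite F \<and>
     (\<forall>f\<in>F. distinct f \<and> length f \<ge> 3 \<and> set f \<subseteq> V) \<and>
     (\<forall>f\<in>F. \<forall>g\<in>F. f \<noteq> g \<longrightarrow>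
        set f \<inter> set g = {} \<or> card (set f \<inter> set g) = 1 \<or>
        set f \<inter> set g \<in> face_edges f \<inter> face_edges g) \<and>
     (\<forall>v\<in>V. \<exists>fs us. face_cycle_at F v fs us) \<and>
     map_connected V F"

definition euler_char :: "'a set \<Rightarrow> 'a list set \<Rightarrow> int" where
  "euler_char V F = int (card V) - int (card (map_edges F)) + int (card F)"

definition semi_equivelar_map :: "'a set \<Rightarrow> 'a list set \<Rightarrow> nat list \<Rightarrow> bool" where
  "semi_equivelar_map V F T \<longleftrightarrow>
     polyhedral_map V F \<and>
     (\<forall>v\<in>V. \<exists>fs us n. face_cycle_at F v fs us \<and>
        (map length fs = rotate n T \<or> map length fs = rotate n (rev T)))"

end

theory Submission
  imports Defs "HOL-Library.Multiset"
begin

text \<open>Double counting vertex--edge and vertex--face incidences in a semi-equivelar map of type T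
  whose faces are triangles and quadrilaterals gives \<open>12 \<chi> = n (12 - 6 d + 4 n\<^sub>3 + 3 n\<^sub>4)\<close>,
  where n is the number of vertices, d the length of T and \<open>n\<^sub>3, n\<^sub>4\<close> the numbers of 3s and 4s
  in T. For both types \<open>(3\<^sup>4,4\<^sup>2)\<close> and \<open>(3,4\<^sup>4)\<close> the bracket equals -2, so \<open>\<chi> = -1\<close>
  forces n = 6. A vertex of type \<open>(3\<^sup>4,4\<^sup>2)\<close> has 6 distinct neighbours, but only 5 other
  vertices exist. A vertex of type \<open>(3,4\<^sup>4)\<close> is then adjacent to all 5 other vertices, in
  particular to the opposite corner of a quadrilateral at it; since two faces of a polyhedral map
  meet in a vertex or an edge, such a diagonal is never an edge.\<close>

lemma face_edges_iff: "e \<in> face_edges f \<longleftrightarrow> (\<exists>i<length f. e = {f ! i, f ! (Suc i mod length f)})"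
  by (auto simp: face_edges_def)

lemma finite_face_edges: "finite (face_edges f)"
proof -
  have "face_edges f = (\<lambda>i. {f ! i, f ! (Suc i mod length f)}) ` {..<length f}"
    by (auto simp: face_edges_def)
  then show ?thesis
    by simp
qed

lemma face_edge_two_vertices:
  assumes "distinct f" "3 \<le> length f" "e \<in> face_edges f"
  shows "card e = 2" "e \<subseteq> set f"
proof -
  obtain i where i: "i < length f" "e = {f ! i, f ! (Suc i mod length f)}"
    using assms(3) by (auto simp: face_edges_iff)
  have j: "Suc i mod length f < length f" "Suc i mod length f \<noteq> i"
    using i(1) assms(2) by (auto simp: mod_Suc)
  then have "f ! i \<noteq> f ! (Suc i mod length f)"
    using i(1) assms(1) by (simp add: nth_eq_iff_index_eq)
  then show "card e = 2" "e \<subseteq> set f"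
    using i j(1) by auto
qed

lemma face_edge_at_nth:
  assumes "distinct g" "k < length g" "e \<in> face_edges g" "g ! k \<in> e"
  shows "e = {g ! k, g ! (Suc k mod length g)} \<or> e = {g ! k, g ! ((k + length g - 1) mod length g)}"
proof -
  obtain j where j: "j < length g" "e = {g ! j, g ! (Suc j mod length g)}"
    using assms(3) by (auto simp: face_edges_iff)
  have "Suc j mod length g < length g"
    using j(1) by (intro mod_less_divisor) linarith
  then have "k = j \<or> k = Suc j mod length g"
    using assms j by (auto simp: nth_eq_iff_index_eq)
  moreover have "j = (Suc j mod length g + length g - 1) mod length g"
    using j(1) by (auto simp: mod_Suc)
  ultimately show ?thesis
    using j(2) by auto
qed

lemma quadrilateral_diagonal_not_face_edge:
  assumes "distinct f" "length f = 4"
  shows "{f ! 0, f ! 2} \<notin> face_edges f"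
proof
  assume "{f ! 0, f ! 2} \<in> face_edges f"
  then obtain i where i: "i < 4" "{f ! 0, f ! 2} = {f ! i, f ! (Suc i mod 4)}"
    using assms(2) by (auto simp: face_edges_iff)
  have "f ! 0 \<noteq> f ! 2"
    using assms by (simp add: nth_eq_iff_index_eq)
  then consider "f ! 0 = f ! i" "f ! 2 = f ! (Suc i mod 4)" | "f ! 0 = f ! (Suc i mod 4)" "f ! 2 = f ! i"
    using i(2) by (auto simp: doubleton_eq_iff)
  then show False
    using i(1) assms by cases (simp_all add: nth_eq_iff_index_eq)
qed

lemma polyhedral_map_face:
  assumes "polyhedral_map V F" "f \<in> F"
  shows "distinct f" "3 \<le> length f" "set f \<subseteq> V"
  using assms by (auto simp: polyhedral_map_def)

lemma polyhedral_map_faces_meet: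
  assumes "polyhedral_map V F" "f \<in> F" "g \<in> F" "f \<noteq> g"
  shows "set f \<inter> set g = {} \<or> card (set f \<inter> set g) = 1 \<or> set f \<inter> set g \<in> face_edges f"
  using assms unfolding polyhedral_map_def by blast

lemma map_edge_two_vertices:
  assumes "polyhedral_map V F" "e \<in> map_edges F"
  shows "card e = 2" "e \<subseteq> V"
proof -
  obtain g where "g \<in> F" "e \<in> face_edges g"
    using assms(2) by (auto simp: map_edges_def)
  then show "card e = 2" "e \<subseteq> V"
    using face_edge_two_vertices[of g e] polyhedral_map_face[OF assms(1), of g] by auto
qed

lemma map_edges_at_vertex:
  assumes P: "polyhedral_map V F" and cyc: "face_cycle_at F v fs us"
  shows "{e \<in> map_edges F. v \<in> e} = (\<lambda>u. {v, u}) ` set us"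
proof -
  have len: "length fs = length us" "3 \<le> length fs" and "distinct us"
    and faces: "set fs = {f \<in> F. v \<in> set f}"
    and edges: "\<And>i. i < length fs \<Longrightarrow> {v, us ! i} \<in> face_edges (fs ! i) \<and>
                       {v, us ! (Suc i mod length fs)} \<in> face_edges (fs ! i)"
    using cyc by (auto simp: face_cycle_at_def)
  have "e \<in> map_edges F" if e_mem: "e \<in> (\<lambda>u. {v, u}) ` set us" for e
  proof -
    obtain u where "u \<in> set us" "e = {v, u}"
      using e_mem by blast
    then obtain i where "i < length fs" "e = {v, us ! i}"
      using len(1) by (auto simp: in_set_conv_nth)
    then have "e \<in> face_edges (fs ! i)"
      using edges by blast
    moreover have "fs ! i \<in> F"
      using \<open>i < length fs\<close> faces nth_mem[of i fs] by simp
    ultimately show ?thesis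
      unfolding map_edges_def by blast
  qed
  moreover have "e \<in> (\<lambda>u. {v, u}) ` set us" if e_mem: "e \<in> map_edges F" "v \<in> e" for e
  proof -
    obtain g where g: "g \<in> F" "e \<in> face_edges g"
      using e_mem(1) by (auto simp: map_edges_def)
    have "distinct g" "3 \<le> length g"
      using polyhedral_map_face[OF P g(1)] by auto
    then have "v \<in> set g"
      using face_edge_two_vertices(2) g(2) \<open>v \<in> e\<close> by blast
    then obtain k where k: "k < length g" "g ! k = v"
      by (auto simp: in_set_conv_nth)
    have "g \<in> set fs"
      using faces g(1) \<open>v \<in> set g\<close> by blast
    then obtain i where i: "i < length fs" "fs ! i = g"
      by (auto simp: in_set_conv_nth)
    let ?j = "Suc i mod length fs"
    have j: "?j < length fs" "?j \<noteq> i"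
      using i(1) len(2) by (auto simp: mod_Suc)
    then have "us ! i \<noteq> us ! ?j"
      using i(1) len(1) \<open>distinct us\<close> by (simp add: nth_eq_iff_index_eq)
    obtain n\<^sub>1 n\<^sub>2 where at_v: "\<And>e'. e' \<in> face_edges g \<Longrightarrow> v \<in> e' \<Longrightarrow> e' \<in> {{v, n\<^sub>1}, {v, n\<^sub>2}}"
      using face_edge_at_nth[OF \<open>distinct g\<close> k(1)] k(2) by blast
    have "{v, us ! i} \<in> {{v, n\<^sub>1}, {v, n\<^sub>2}}" "{v, us ! ?j} \<in> {{v, n\<^sub>1}, {v, n\<^sub>2}}"
      "e \<in> {{v, n\<^sub>1}, {v, n\<^sub>2}}"
      using at_v edges[OF i(1)] g(2) \<open>v \<in> e\<close> unfolding i(2) by auto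
    then have "e \<in> {{v, us ! i}, {v, us ! ?j}}"
      using \<open>us ! i \<noteq> us ! ?j\<close> by (auto simp: doubleton_eq_iff)
    moreover have "us ! i \<in> set us" "us ! ?j \<in> set us"
      using i(1) j(1) len(1) by auto
    ultimately show ?thesis
      by blast
  qed
  ultimately show ?thesis
    by blast
qed

lemma finite_map_edges: "finite F \<Longrightarrow> finite (map_edges F)"
  by (simp add: map_edges_def finite_face_edges)

lemma face_cycle_neighbours_subset:
  assumes "polyhedral_map V F" "face_cycle_at F v fs us"
  shows "set us \<subseteq> V - {v}"
proof
  fix u
  assume "u \<in> set us"
  then have "{v, u} \<in> map_edges F"
    using map_edges_at_vertex[OF assms] by blast
  then have "card {v, u} = 2" "{v, u} \<subseteq> V"
    using map_edge_two_vertices[OF assms(1)] by auto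
  then show "u \<in> V - {v}"
    by (cases "u = v") auto
qed

lemma card_map_edges_at_vertex:
  assumes "polyhedral_map V F" "face_cycle_at F v fs us"
  shows "card {e \<in> map_edges F. v \<in> e} = length fs"
proof -
  have "inj_on (\<lambda>u. {v, u}) (set us)"
    by (auto simp: inj_on_def doubleton_eq_iff)
  then have "card {e \<in> map_edges F. v \<in> e} = card (set us)"
    by (simp add: map_edges_at_vertex[OF assms] card_image)
  also have "\<dots> = length fs"
    using assms(2) by (simp add: face_cycle_at_def distinct_card)
  finally show ?thesis .
qed

lemma quadrilateral_diagonal_not_map_edge:
  assumes P: "polyhedral_map V F" and f: "f \<in> F" "length f = 4"
  shows "{f ! 0, f ! 2} \<notin> map_edges F"
proof
  assume "{f ! 0, f ! 2} \<in> map_edges F"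
  then obtain g where g: "g \<in> F" "{f ! 0, f ! 2} \<in> face_edges g"
    by (auto simp: map_edges_def)
  have "distinct f"
    using polyhedral_map_face[OF P f(1)] by simp
  then have diagonal: "{f ! 0, f ! 2} \<notin> face_edges f"
    using quadrilateral_diagonal_not_face_edge f(2) by blast
  have "{f ! 0, f ! 2} \<subseteq> set g"
    using face_edge_two_vertices(2) polyhedral_map_face[OF P g(1)] g(2) by blast
  then have sub: "{f ! 0, f ! 2} \<subseteq> set f \<inter> set g"
    using f(2) by auto
  have two: "card {f ! 0, f ! 2} = 2"
    using \<open>distinct f\<close> f(2) by (simp add: nth_eq_iff_index_eq)
  have "set f \<inter> set g \<noteq> {}" "card (set f \<inter> set g) \<noteq> 1"
    using sub two card_mono[OF _ sub] by auto
  moreover have "f \<noteq> g"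
    using diagonal g(2) by auto
  ultimately have meet: "set f \<inter> set g \<in> face_edges f"
    using polyhedral_map_faces_meet[OF P f(1) g(1)] by blast
  then have "card (set f \<inter> set g) = 2"
    using face_edge_two_vertices(1) polyhedral_map_face[OF P f(1)] by blast
  then have "{f ! 0, f ! 2} = set f \<inter> set g"
    using card_subset_eq[OF _ sub] two by simp
  with meet diagonal show False
    by simp
qed

lemma mset_rotate: "mset (rotate n xs) = mset xs"
  by (metis append_take_drop_id mset_append rotate_drop_take union_commute)

lemma semi_equivelar_map_face_cycle:
  assumes "semi_equivelar_map V F T" "v \<in> V"
  obtains fs us where "face_cycle_at F v fs us" "mset (map length fs) = mset T"
  using assms unfolding semi_equivelar_map_def by (metis mset_rev mset_rotate)

lemma semi_equivelar_map_degree: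
  assumes "semi_equivelar_map V F T" "v \<in> V"
  shows "card {e \<in> map_edges F. v \<in> e} = length T"
proof -
  obtain fs us where "face_cycle_at F v fs us" "mset (map length fs) = mset T"
    using semi_equivelar_map_face_cycle[OF assms] .
  moreover have "polyhedral_map V F"
    using assms(1) by (simp add: semi_equivelar_map_def)
  ultimately show ?thesis
    using card_map_edges_at_vertex by (metis length_map size_mset)
qed

lemma semi_equivelar_map_faces_at_vertex:
  assumes "semi_equivelar_map V F T" "v \<in> V"
  shows "card {f \<in> F. length f = k \<and> v \<in> set f} = count (mset T) k"
proof -
  obtain fs us where cyc: "face_cycle_at F v fs us" and type: "mset (map length fs) = mset T"
    using semi_equivelar_map_face_cycle[OF assms] .
  have "{f \<in> F. length f = k \<and> v \<in> set f} = set (filter (\<lambda>f. length f = k) fs)"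
    using cyc by (auto simp: face_cycle_at_def)
  moreover have "distinct fs"
    using cyc by (simp add: face_cycle_at_def)
  ultimately have "card {f \<in> F. length f = k \<and> v \<in> set f} = length (filter (\<lambda>f. length f = k) fs)"
    by (metis distinct_card distinct_filter)
  also have "\<dots> = count (mset (map length fs)) k"
    by (induction fs) auto
  finally show ?thesis
    using type by simp
qed

lemma semi_equivelar_map_face_length:
  assumes "semi_equivelar_map V F T" "f \<in> F"
  shows "length f \<in> set T"
proof -
  have "polyhedral_map V F"
    using assms(1) by (simp add: semi_equivelar_map_def)
  then have "3 \<le> length f" "set f \<subseteq> V"
    using polyhedral_map_face assms(2) by blast+
  then obtain v where "v \<in> set f" "v \<in> V"
    by (cases f) auto
  then obtain fs us where cyc: "face_cycle_at F v fs us" and type: "mset (map length fs) = mset T"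
    using semi_equivelar_map_face_cycle[OF assms(1)] by blast
  have "f \<in> set fs"
    using cyc \<open>v \<in> set f\<close> assms(2) by (simp add: face_cycle_at_def)
  then show ?thesis
    using type by (metis image_eqI set_map set_mset_mset)
qed

lemma semi_equivelar_map_edge_count:
  assumes sem: "semi_equivelar_map V F T"
  shows "2 * card (map_edges F) = length T * card V"
proof -
  have P: "polyhedral_map V F"
    using sem by (simp add: semi_equivelar_map_def)
  then have "finite V" "finite (map_edges F)"
    by (auto simp: polyhedral_map_def finite_map_edges)
  then have "(\<Sum>e\<in>map_edges F. card {v \<in> V. v \<in> e}) = length T * card V"
    using semi_equivelar_map_degree[OF sem] by (intro sum_multicount) auto
  moreover have "card {v \<in> V. v \<in> e} = 2" if "e \<in> map_edges F" for e
    using map_edge_two_vertices[OF P that] by (simp add: Int_absorb1 Collect_mem_eq flip: Int_def)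
  ultimately show ?thesis
    by simp
qed

lemma semi_equivelar_map_face_count:
  assumes sem: "semi_equivelar_map V F T"
  shows "k * card {f \<in> F. length f = k} = count (mset T) k * card V"
proof -
  have P: "polyhedral_map V F"
    using sem by (simp add: semi_equivelar_map_def)
  then have "finite V" "finite F"
    by (auto simp: polyhedral_map_def)
  then have "(\<Sum>f\<in>{f \<in> F. length f = k}. card {v \<in> V. v \<in> set f}) = count (mset T) k * card V"
    using semi_equivelar_map_faces_at_vertex[OF sem] by (intro sum_multicount) auto
  moreover have "card {v \<in> V. v \<in> set f} = k" if "f \<in> F" "length f = k" for f
  proof -
    have "{v \<in> V. v \<in> set f} = set f"
      using polyhedral_map_face(3)[OF P that(1)] by blast
    then show ?thesis
      using polyhedral_map_face(1)[OF P that(1)] that(2) by (simp add: distinct_card)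
  qed
  ultimately show ?thesis
    by (simp add: mult.commute)
qed

lemma semi_equivelar_map_euler_char:
  assumes sem: "semi_equivelar_map V F T" and T: "set T \<subseteq> {3, 4}"
  shows "12 * euler_char V F =
    int (card V) * (12 - 6 * int (length T) + 4 * int (count (mset T) 3) + 3 * int (count (mset T) 4))"
proof -
  let ?F\<^sub>3 = "{f \<in> F. length f = 3}" and ?F\<^sub>4 = "{f \<in> F. length f = 4}"
  have "finite F"
    using sem by (simp add: semi_equivelar_map_def polyhedral_map_def)
  moreover have "F = ?F\<^sub>3 \<union> ?F\<^sub>4"
    using semi_equivelar_map_face_length[OF sem] T by auto
  moreover have "card (?F\<^sub>3 \<union> ?F\<^sub>4) = card ?F\<^sub>3 + card ?F\<^sub>4"
    by (rule card_Un_disjoint) (use \<open>finite F\<close> in auto)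
  ultimately have faces: "card F = card ?F\<^sub>3 + card ?F\<^sub>4"
    by simp
  have edges\<^sub>2: "2 * int (card (map_edges F)) = int (length T) * int (card V)"
    using arg_cong[OF semi_equivelar_map_edge_count[OF sem], of int] by simp
  have faces\<^sub>3: "3 * int (card ?F\<^sub>3) = int (count (mset T) 3) * int (card V)"
    using arg_cong[OF semi_equivelar_map_face_count[OF sem, of 3], of int] by simp
  have faces\<^sub>4: "4 * int (card ?F\<^sub>4) = int (count (mset T) 4) * int (card V)"
    using arg_cong[OF semi_equivelar_map_face_count[OF sem, of 4], of int] by simp
  have "12 * euler_char V F =
      12 * int (card V) - 6 * (2 * int (card (map_edges F)))
      + 4 * (3 * int (card ?F\<^sub>3)) + 3 * (4 * int (card ?F\<^sub>4))"
    unfolding euler_char_def faces by simp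
  also have "\<dots> = int (card V) *
      (12 - 6 * int (length T) + 4 * int (count (mset T) 3) + 3 * int (count (mset T) 4))"
    unfolding edges\<^sub>2 faces\<^sub>3 faces\<^sub>4 by (simp add: algebra_simps)
  finally show ?thesis .
qed

lemma semi_equivelar_map_neighbours:
  assumes sem: "semi_equivelar_map V F T" and "v \<in> V"
  obtains N where "N \<subseteq> V - {v}" "card N = length T" "\<forall>u \<in> N. {v, u} \<in> map_edges F"
proof -
  obtain fs us where cyc: "face_cycle_at F v fs us" and type: "mset (map length fs) = mset T"
    using semi_equivelar_map_face_cycle[OF assms] .
  have P: "polyhedral_map V F"
    using sem by (simp add: semi_equivelar_map_def)
  show ?thesis
  proof (rule that)
    show "set us \<subseteq> V - {v}"
      using face_cycle_neighbours_subset[OF P cyc] .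
    show "card (set us) = length T"
      using cyc arg_cong[OF type, of size] by (simp add: face_cycle_at_def distinct_card)
    show "\<forall>u \<in> set us. {v, u} \<in> map_edges F"
    proof
      fix u
      assume "u \<in> set us"
      then have "{v, u} \<in> {e \<in> map_edges F. v \<in> e}"
        unfolding map_edges_at_vertex[OF P cyc] by (rule imageI)
      then show "{v, u} \<in> map_edges F"
        by simp
    qed
  qed
qed

lemma semi_equivelar_map_length_type_less_card:
  assumes sem: "semi_equivelar_map V F T" and "v \<in> V"
  shows "length T < card V"
proof -
  obtain N where N: "N \<subseteq> V - {v}" "card N = length T"
    by (rule semi_equivelar_map_neighbours[OF assms])
  have "finite V"
    using sem by (simp add: semi_equivelar_map_def polyhedral_map_def)
  then have "card N \<le> card (V - {v})"
    using N(1) by (intro card_mono) auto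
  also have "\<dots> < card V"
    using \<open>finite V\<close> \<open>v \<in> V\<close> by (rule card_Diff1_less)
  finally show ?thesis
    using N(2) by simp
qed

lemma semi_equivelar_map_Suc_length_type_less_card:
  assumes sem: "semi_equivelar_map V F T" and "v \<in> V" "4 \<in> set T"
  shows "Suc (length T) < card V"
proof (rule ccontr)
  assume "\<not> Suc (length T) < card V"
  then have card_V: "card V = Suc (length T)"
    using semi_equivelar_map_length_type_less_card[OF sem \<open>v \<in> V\<close>] by simp
  have P: "polyhedral_map V F" and "finite V"
    using sem by (simp_all add: semi_equivelar_map_def polyhedral_map_def)
  obtain fs us where cyc: "face_cycle_at F v fs us" and type: "mset (map length fs) = mset T"
    using semi_equivelar_map_face_cycle[OF sem \<open>v \<in> V\<close>] .
  have "4 \<in> length ` set fs"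
    using \<open>4 \<in> set T\<close> arg_cong[OF type, of set_mset] by simp
  then obtain f where f: "f \<in> F" "length f = 4"
    using cyc by (auto simp: face_cycle_at_def)
  have corners: "f ! 0 \<in> V" "f ! 2 \<in> V"
    using polyhedral_map_face(3)[OF P f(1)] f(2) by auto
  have "f ! 0 \<noteq> f ! 2"
    using polyhedral_map_face(1)[OF P f(1)] f(2) by (simp add: nth_eq_iff_index_eq)
  obtain N where N: "N \<subseteq> V - {f ! 0}" "card N = length T"
    and edges: "\<forall>u \<in> N. {f ! 0, u} \<in> map_edges F"
    using semi_equivelar_map_neighbours[OF sem corners(1)] .
  have "card (V - {f ! 0}) = length T"
    using card_V corners(1) \<open>finite V\<close> by simp
  then have "N = V - {f ! 0}"
    using N(2) \<open>finite V\<close> by (intro card_subset_eq[OF _ N(1)]) simp_all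
  then have "{f ! 0, f ! 2} \<in> map_edges F"
    using edges corners(2) \<open>f ! 0 \<noteq> f ! 2\<close> by auto
  then show False
    using quadrilateral_diagonal_not_map_edge[OF P f] by contradiction
qed

theorem mainTheorem11:
  fixes V :: "'a set" and F :: "'a list set"
  assumes "euler_char V F = -1"
  shows "\<not> semi_equivelar_map V F [3,3,3,3,4,4] \<and> \<not> semi_equivelar_map V F [3,4,4,4,4]"
proof (intro conjI notI)
  assume sem: "semi_equivelar_map V F [3,3,3,3,4,4]"
  have "card V = 6"
    using semi_equivelar_map_euler_char[OF sem] assms by simp
  then obtain v where "v \<in> V"
    by fastforce
  show False
    using semi_equivelar_map_length_type_less_card[OF sem \<open>v \<in> V\<close>] \<open>card V = 6\<close> by simp
next
  assume sem: "semi_equivelar_map V F [3,4,4,4,4]"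
  have "card V = 6"
    using semi_equivelar_map_euler_char[OF sem] assms by simp
  then obtain v where "v \<in> V"
    by fastforce
  show False
    using semi_equivelar_map_Suc_length_type_less_card[OF sem \<open>v \<in> V\<close>] \<open>card V = 6\<close> by simp
qed

end
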